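(* For every $n$-qubit pure state $\ket\psi=\sum_{x\in\mathbb F_2^n}c_x\ket x$, $$32^n\sum_{x\in\mathbb F_2^{2n}}\widehat{p_\psi}(x)^3\ \ge\ |c_{0}|^{12},$$ where $c_0$ is the amplitude of $\ket{0^n}$.
   Context: For $x=(a,b)\in\mathbb F_2^{2n}$ with $a,b\in\mathbb F_2^n$, the Weyl operator is $W_x=i^{a\cdot b}X^{a_1}Z^{b_1}\otimes\cdots\otimes X^{a_n}Z^{b_n}$, where $a\cdot b=\sum_j a_jb_j\in\mathbb Z$. The characteristic distribution is $p_\psi(x)=2^{-n}|\braket{\psi|W_x|\psi}|^2$. For $f:\mathbb F_2^{2n}\to\mathbb R$ the Fourier coefficients are $\widehat f(x)=4^{-n}\sum_{y\in\mathbb F_2^{2n}}f(y)(-1)^{x\cdot y}$ (dot product mod 2). *)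

theory Defs
  imports "HOL-Analysis.Analysis"
begin

text \<open>Bit strings in F_2^n are boolean lists of length n.\<close>
definition bitstrings :: "nat \<Rightarrow> bool list set" where
  "bitstrings n = {xs. length xs = n}"

definition bdot :: "bool list \<Rightarrow> bool list \<Rightarrow> nat" where
  "bdot a b = card {j. j < length a \<and> j < length b \<and> a ! j \<and> b ! j}"

definition bxor :: "bool list \<Rightarrow> bool list \<Rightarrow> bool list" where
  "bxor a b = map2 (\<noteq>) a b"

text \<open>Action of the single-qubit-tensor Pauli string X^a Z^b on a vector psi
  (given by its amplitudes in the computational basis): Z^b |y> = (-1)^(b.y) |y>,
  X^a |y> = |y xor a>.\<close>
definition XZ_apply :: "bool list \<Rightarrow> bool list \<Rightarrow> (bool list \<Rightarrow> complex) \<Rightarrow> (bool list \<Rightarrow> complex)" where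
  "XZ_apply a b psi = (\<lambda>z. (-1) ^ bdot b (bxor z a) * psi (bxor z a))"

definition weyl_apply :: "bool list \<Rightarrow> bool list \<Rightarrow> (bool list \<Rightarrow> complex) \<Rightarrow> (bool list \<Rightarrow> complex)" where
  "weyl_apply a b psi = (\<lambda>z. \<i> ^ bdot a b * XZ_apply a b psi z)"

definition braket :: "nat \<Rightarrow> (bool list \<Rightarrow> complex) \<Rightarrow> (bool list \<Rightarrow> complex) \<Rightarrow> complex" where
  "braket n phi chi = (\<Sum>z\<in>bitstrings n. cnj (phi z) * chi z)"

definition char_dist :: "nat \<Rightarrow> (bool list \<Rightarrow> complex) \<Rightarrow> bool list \<times> bool list \<Rightarrow> real" where
  "char_dist n psi x = (case x of (a, b) \<Rightarrow>
     (1 / 2 ^ n) * (cmod (braket n psi (weyl_apply a b psi)))\<^sup>2)"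

definition sign2 :: "bool list \<times> bool list \<Rightarrow> bool list \<times> bool list \<Rightarrow> real" where
  "sign2 x y = (case x of (a, b) \<Rightarrow> case y of (a', b') \<Rightarrow>
     (-1) ^ (bdot a a' + bdot b b'))"

definition fourier :: "nat \<Rightarrow> (bool list \<times> bool list \<Rightarrow> real) \<Rightarrow> bool list \<times> bool list \<Rightarrow> real" where
  "fourier n f x = (1 / 4 ^ n) * (\<Sum>y\<in>bitstrings n \<times> bitstrings n. f y * sign2 x y)"

end

theory Submission
  imports Defs
begin

text \<open>Write p for the characteristic distribution. The symplectic Fourier transform maps p to
  itself up to swapping the two halves of the argument, p^(a, b) = p(b, a) / 2^n, so the sum of
  the cubed Fourier coefficients is 8^-n times the sum of p^3, which dominates its row a = 0.
  There p(0, b) = (\<Sum>z. |c z|^2 (-1)^(b \<cdot> z))^2 / 2^n, so by Parseval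
  \<Sum>b. p(0, b) = \<Sum>z. |c z|^4 \<ge> |c 0|^4, and the power-mean inequality
  (\<Sum> x)^3 \<le> N^2 \<Sum> x^3 over the N = 2^n values of b gives the bound.\<close>

lemma mem_bitstrings [simp]: "xs \<in> bitstrings n \<longleftrightarrow> length xs = n"
  by (simp add: bitstrings_def)

lemma finite_bitstrings [simp]: "finite (bitstrings n)"
  using finite_lists_length_eq[of "UNIV :: bool set" n] by (simp add: bitstrings_def)

lemma card_bitstrings: "card (bitstrings n) = 2 ^ n"
  using card_lists_length_eq[of "UNIV :: bool set" n] by (simp add: bitstrings_def)

lemma bitstrings_Suc: "bitstrings (Suc n) = (\<lambda>(x, xs). x # xs) ` (UNIV \<times> bitstrings n)"
  by (auto simp: image_iff length_Suc_conv)

lemma bxor_Nil [simp]: "bxor [] b = []" "bxor a [] = []"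
  and bxor_Cons [simp]: "bxor (x # xs) (y # ys) = (x \<noteq> y) # bxor xs ys"
  by (auto simp: bxor_def)

lemma length_bxor [simp]: "length (bxor a b) = min (length a) (length b)"
  by (simp add: bxor_def)

lemma bxor_commute: "bxor a b = bxor b a"
  by (induction a b rule: list_induct2') auto

lemma bxor_assoc: "bxor (bxor a b) d = bxor a (bxor b d)"
proof (induction a b arbitrary: d rule: list_induct2')
  case (4 x xs y ys)
  then show ?case
    by (cases d) auto
qed auto

lemma bxor_left_commute: "bxor (bxor a b) d = bxor (bxor a d) b"
  by (metis bxor_assoc bxor_commute)

lemma bxor_replicate_False [simp]: "bxor a (replicate (length a) False) = a"
  by (induction a) auto

lemma bxor_self [simp]: "bxor a a = replicate (length a) False"
  by (induction a) auto

lemma bxor_bxor_cancel [simp]: "length a = length b \<Longrightarrow> bxor a (bxor a b) = b"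
  by (metis bxor_assoc bxor_commute bxor_replicate_False bxor_self)

lemma bxor_eq_replicate_False_iff:
  "length a = length b \<Longrightarrow> bxor a b = replicate (length a) False \<longleftrightarrow> a = b"
  by (induction a b rule: list_induct2) auto

lemma bdot_Nil [simp]: "bdot [] b = 0" "bdot a [] = 0"
  by (auto simp: bdot_def)

lemma bdot_Cons [simp]: "bdot (x # xs) (y # ys) = (if x \<and> y then 1 else 0) + bdot xs ys"
proof -
  have "{j. j < length (x # xs) \<and> j < length (y # ys) \<and> (x # xs) ! j \<and> (y # ys) ! j}
      = (if x \<and> y then {0} else {}) \<union> Suc ` {j. j < length xs \<and> j < length ys \<and> xs ! j \<and> ys ! j}"
    by (auto simp: image_iff nth_Cons split: nat.splits) (metis Suc_pred not_gr0)+
  then show ?thesis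
    by (auto simp: bdot_def card_image)
qed

lemma bdot_replicate_False [simp]: "bdot (replicate n False) b = 0"
  by (auto simp: bdot_def)

lemma bdot_commute: "bdot a b = bdot b a"
  unfolding bdot_def by (metis (no_types, lifting) conj_commute conj_left_commute)

lemma sign_bdot_bxor:
  "length u = length b \<Longrightarrow> length v = length b \<Longrightarrow>
   (-1 :: 'a :: comm_ring_1) ^ bdot b (bxor u v) = (-1) ^ bdot b u * (-1) ^ bdot b v"
proof (induction b arbitrary: u v)
  case (Cons x b)
  then show ?case
    by (auto simp: length_Suc_conv power_add)
qed simp

lemma sum_sign_bdot:
  "length u = n \<Longrightarrow> (\<Sum>b\<in>bitstrings n. (-1 :: 'a :: comm_ring_1) ^ bdot b u)
     = (if u = replicate n False then 2 ^ n else 0)"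
proof (induction n arbitrary: u)
  case (Suc n)
  then obtain u0 us where u: "u = u0 # us" "length us = n"
    by (metis length_Suc_conv)
  have "inj_on (\<lambda>(x, xs). x # xs) (UNIV \<times> bitstrings n)"
    by (auto simp: inj_on_def)
  then have "(\<Sum>b\<in>bitstrings (Suc n). (-1 :: 'a) ^ bdot b u)
      = (\<Sum>x\<in>UNIV. \<Sum>xs\<in>bitstrings n. (-1 :: 'a) ^ bdot (x # xs) u)"
    by (simp add: bitstrings_Suc sum.reindex case_prod_unfold sum.cartesian_product)
  also have "\<dots> = (if u0 then 0 else 2) * (\<Sum>xs\<in>bitstrings n. (-1 :: 'a) ^ bdot xs us)"
    by (simp add: u UNIV_bool power_add sum_distrib_left[symmetric] algebra_simps sum_negf)
  finally show ?case
    using Suc.IH[OF u(2)] u by auto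
qed (simp add: bitstrings_def)

lemma char_dist_eq_sum:
  assumes "length a = n" "length b = n"
  shows "complex_of_real (char_dist n c (a, b)) =
    (\<Sum>z\<in>bitstrings n. \<Sum>w\<in>bitstrings n. cnj (c z) * c (bxor z a) * c w * cnj (c (bxor w a))
       * (-1) ^ bdot b z * (-1) ^ bdot b w) / 2 ^ n"
proof -
  let ?E = "braket n c (XZ_apply a b c)"
  have "braket n c (weyl_apply a b c) = \<i> ^ bdot a b * ?E"
    unfolding braket_def weyl_apply_def by (simp add: sum_distrib_left mult_ac)
  then have "complex_of_real (char_dist n c (a, b)) = ?E * cnj ?E / 2 ^ n"
    by (simp add: char_dist_def norm_mult norm_power flip: complex_norm_square of_real_power)
       (metis of_real_numeral of_real_power)
  also have "?E * cnj ?E = (\<Sum>z\<in>bitstrings n. \<Sum>w\<in>bitstrings n.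
       cnj (c z) * c (bxor z a) * c w * cnj (c (bxor w a))
       * ((-1) ^ bdot b (bxor z a) * (-1) ^ bdot b (bxor w a)))"
    by (simp only: braket_def XZ_apply_def cnj_sum sum_product) (simp add: mult_ac)
  also have "\<dots> = (\<Sum>z\<in>bitstrings n. \<Sum>w\<in>bitstrings n.
       cnj (c z) * c (bxor z a) * c w * cnj (c (bxor w a)) * (-1) ^ bdot b z * (-1) ^ bdot b w)"
    using assms by (intro sum.cong refl) (simp add: sign_bdot_bxor mult_ac)
  finally show ?thesis .
qed

lemma sum_sign_char_dist:
  assumes "length a = n" "length b = n"
  shows "(\<Sum>b'\<in>bitstrings n. complex_of_real (char_dist n c (a, b')) * (-1) ^ bdot b' b)
    = (\<Sum>z\<in>bitstrings n. cnj (c z) * c (bxor z a) * c (bxor z b) * cnj (c (bxor (bxor z b) a)))"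
proof -
  define T where "T z w = cnj (c z) * c (bxor z a) * c w * cnj (c (bxor w a))" for z w
  have orth: "(\<Sum>b'\<in>bitstrings n. (-1 :: complex) ^ bdot b' z * (-1) ^ bdot b' w * (-1) ^ bdot b' b)
      = (if w = bxor z b then 2 ^ n else 0)" if "length z = n" "length w = n" for z w
  proof -
    have "bxor (bxor z w) b = replicate n False \<longleftrightarrow> w = bxor z b"
      using that assms bxor_eq_replicate_False_iff[of "bxor z w" b] by (auto simp: bxor_bxor_cancel)
    then show ?thesis
      using that assms by (simp add: sum_sign_bdot flip: sign_bdot_bxor)
  qed
  have "(\<Sum>b'\<in>bitstrings n. complex_of_real (char_dist n c (a, b')) * (-1) ^ bdot b' b)
      = (\<Sum>z\<in>bitstrings n. \<Sum>w\<in>bitstrings n. T z w *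
          (\<Sum>b'\<in>bitstrings n. (-1) ^ bdot b' z * (-1) ^ bdot b' w * (-1) ^ bdot b' b)) / 2 ^ n"
    using assms unfolding T_def
    by (simp add: char_dist_eq_sum sum_divide_distrib sum_distrib_left sum_distrib_right mult_ac)
       (subst sum.swap, subst (2) sum.swap, simp add: sum_distrib_left)
  also have "\<dots> = (\<Sum>z\<in>bitstrings n. T z (bxor z b))"
    using assms
    by (simp add: orth if_distrib[of "\<lambda>t. T _ _ * t"] sum.delta' sum_divide_distrib cong: if_cong)
  finally show ?thesis
    unfolding T_def .
qed

lemma bij_betw_bxor: "length y = n \<Longrightarrow> bij_betw (bxor y) (bitstrings n) (bitstrings n)"
  by (rule bij_betw_byWitness[where f' = "bxor y"]) auto

lemma char_dist_eq_sum_shifted: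
  assumes "length a = n" "length b = n"
  shows "2 ^ n * complex_of_real (char_dist n c (b, a)) =
    (\<Sum>a'\<in>bitstrings n. (-1) ^ bdot a a' * (\<Sum>z\<in>bitstrings n.
       cnj (c z) * c (bxor z a') * c (bxor z b) * cnj (c (bxor (bxor z b) a'))))"
proof -
  have shift: "(\<Sum>w\<in>bitstrings n. cnj (c z) * c (bxor z b) * c w * cnj (c (bxor w b))
        * (-1) ^ bdot a z * (-1) ^ bdot a w)
      = (\<Sum>a'\<in>bitstrings n. (-1) ^ bdot a a' *
        (cnj (c z) * c (bxor z a') * c (bxor z b) * cnj (c (bxor (bxor z b) a'))))"
    if "length z = n" for z
  proof -
    have "(-1 :: complex) ^ bdot a z * (-1) ^ bdot a (bxor z a') = (-1) ^ bdot a a'"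
      if "length a' = n" for a'
      using that \<open>length z = n\<close> assms by (simp add: sign_bdot_bxor mult.assoc[symmetric])
    then show ?thesis
      using that \<comment> \<open>substitute \<open>w = bxor z a'\<close>\<close>
      by (subst sum.reindex_bij_betw[OF bij_betw_bxor, symmetric])
         (auto intro!: sum.cong simp: bxor_left_commute[of z b] mult_ac)
  qed
  show ?thesis
    using assms by (simp add: char_dist_eq_sum shift, subst sum.swap, simp add: sum_distrib_left)
qed

lemma fourier_char_dist:
  assumes "length a = n" "length b = n"
  shows "fourier n (char_dist n c) (a, b) = char_dist n c (b, a) / 2 ^ n"
proof -
  have "complex_of_real (fourier n (char_dist n c) (a, b))
      = (\<Sum>a'\<in>bitstrings n. (-1) ^ bdot a a' * (\<Sum>b'\<in>bitstrings n.
          complex_of_real (char_dist n c (a', b')) * (-1) ^ bdot b' b)) / 4 ^ n"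
    by (simp add: fourier_def sign2_def sum.cartesian_product' power_add bdot_commute[of b]
        sum_distrib_left sum_divide_distrib mult_ac)
  also have "\<dots> = 2 ^ n * complex_of_real (char_dist n c (b, a)) / 4 ^ n"
    using assms by (simp add: sum_sign_char_dist char_dist_eq_sum_shifted)
  also have "\<dots> = complex_of_real (char_dist n c (b, a) / 2 ^ n)"
    by (simp add: field_simps power_mult_distrib[symmetric])
  finally show ?thesis
    by (metis of_real_eq_iff)
qed

lemma convex_on_nonneg_power: "convex_on {0::real..} (\<lambda>x. x ^ k)"
  by (cases "even k")
     (auto intro: convex_on_subset[OF convex_power_even] convex_power_odd)

lemma power_sum_le_card_power_sum:
  fixes x :: "'a \<Rightarrow> real"
  assumes "finite I" "\<And>i. i \<in> I \<Longrightarrow> x i \<ge> 0" "k > 0"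
  shows "(\<Sum>i\<in>I. x i) ^ k \<le> real (card I) ^ (k - 1) * (\<Sum>i\<in>I. x i ^ k)"
proof (cases "I = {}")
  case False
  define N where "N = real (card I)"
  have N: "N > 0"
    using False assms(1) by (simp add: N_def card_gt_0_iff)
  have "((\<Sum>i\<in>I. x i) / N) ^ k \<le> (\<Sum>i\<in>I. x i ^ k) / N"
    using convex_on_sum[OF assms(1) False convex_on_nonneg_power, of "\<lambda>_. 1 / N" x] N assms(2)
    by (simp add: N_def sum_divide_distrib[symmetric] sum_distrib_left[symmetric])
  then have "(\<Sum>i\<in>I. x i) ^ k \<le> N ^ k * ((\<Sum>i\<in>I. x i ^ k) / N)"
    using N by (simp add: power_divide pos_divide_le_eq mult.commute)
  also have "\<dots> = N ^ (k - 1) * (\<Sum>i\<in>I. x i ^ k)"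
    using N \<open>k > 0\<close> by (simp add: power_eq_if)
  finally show ?thesis
    unfolding N_def .
qed (use \<open>k > 0\<close> in \<open>simp add: zero_power\<close>)

lemma parseval_bitstrings:
  fixes q :: "bool list \<Rightarrow> real"
  shows "(\<Sum>b\<in>bitstrings n. (\<Sum>z\<in>bitstrings n. q z * (-1) ^ bdot b z) ^ 2)
     = 2 ^ n * (\<Sum>z\<in>bitstrings n. q z ^ 2)"
proof -
  have orth: "(\<Sum>b\<in>bitstrings n. (-1 :: real) ^ bdot b z * (-1) ^ bdot b w)
      = (if w = z then 2 ^ n else 0)" if "length z = n" "length w = n" for z w
    using that bxor_eq_replicate_False_iff[of z w]
    by (simp add: sum_sign_bdot flip: sign_bdot_bxor)
  have "(\<Sum>b\<in>bitstrings n. (\<Sum>z\<in>bitstrings n. q z * (-1) ^ bdot b z) ^ 2)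
      = (\<Sum>z\<in>bitstrings n. \<Sum>w\<in>bitstrings n. q z * q w *
          (\<Sum>b\<in>bitstrings n. (-1) ^ bdot b z * (-1) ^ bdot b w))"
    by (simp add: power2_eq_square sum_product sum_distrib_left mult_ac)
       (subst sum.swap, subst (2) sum.swap, simp)
  also have "\<dots> = 2 ^ n * (\<Sum>z\<in>bitstrings n. q z ^ 2)"
    by (simp add: orth if_distrib[of "\<lambda>t. _ * t"] sum.delta sum_distrib_left power2_eq_square
        mult_ac cong: if_cong)
  finally show ?thesis .
qed

lemma char_dist_nonneg: "char_dist n c x \<ge> 0"
  by (simp add: char_dist_def split: prod.splits)

lemma sum_cube_fourier_char_dist:
  "(\<Sum>x\<in>bitstrings n \<times> bitstrings n. fourier n (char_dist n c) x ^ 3)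
     = (\<Sum>x\<in>bitstrings n \<times> bitstrings n. char_dist n c x ^ 3) / 8 ^ n"
proof -
  have cube: "((2 :: real) ^ n) ^ 3 = 8 ^ n"
    by (simp add: power3_eq_cube flip: power_mult_distrib)
  have "(\<Sum>x\<in>bitstrings n \<times> bitstrings n. fourier n (char_dist n c) x ^ 3)
      = (\<Sum>a\<in>bitstrings n. \<Sum>b\<in>bitstrings n. char_dist n c (b, a) ^ 3 / 8 ^ n)"
    by (simp add: sum.cartesian_product' fourier_char_dist power_divide cube)
  also have "\<dots> = (\<Sum>x\<in>bitstrings n \<times> bitstrings n. char_dist n c x ^ 3) / 8 ^ n"
    by (subst sum.swap) (simp add: sum.cartesian_product' sum_divide_distrib)
  finally show ?thesis .
qed

lemma char_dist_zero_row:
  assumes "length b = n"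
  shows "char_dist n c (replicate n False, b)
    = (\<Sum>z\<in>bitstrings n. (cmod (c z))\<^sup>2 * (-1) ^ bdot b z)\<^sup>2 / 2 ^ n"
proof -
  have braket_eq: "braket n c (weyl_apply (replicate n False) b c)
      = complex_of_real (\<Sum>z\<in>bitstrings n. (cmod (c z))\<^sup>2 * (-1) ^ bdot b z)"
    unfolding braket_def weyl_apply_def XZ_apply_def of_real_sum
    by (intro sum.cong) (auto simp: mult.left_commute[of "cnj _"] mult.commute[of "cnj _"]
        simp flip: complex_norm_square)
  show ?thesis
    unfolding char_dist_def prod.case braket_eq norm_of_real by (simp add: power2_abs)
qed

lemma sum_char_dist_zero_row:
  "(\<Sum>b\<in>bitstrings n. char_dist n c (replicate n False, b)) = (\<Sum>z\<in>bitstrings n. cmod (c z) ^ 4)"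
  using parseval_bitstrings[of "\<lambda>z. (cmod (c z))\<^sup>2" n]
  by (simp add: char_dist_zero_row sum_divide_distrib[symmetric] flip: power_mult)

theorem claim3p4:
  fixes n :: nat and c :: "bool list \<Rightarrow> complex"
  assumes "(\<Sum>x\<in>bitstrings n. (cmod (c x))\<^sup>2) = 1"
  shows "32 ^ n * (\<Sum>x\<in>bitstrings n \<times> bitstrings n. (fourier n (char_dist n c) x) ^ 3)
           \<ge> cmod (c (replicate n False)) ^ 12"
proof -
  let ?B = "bitstrings n" and ?p = "char_dist n c" and ?z = "replicate n False"
  have "cmod (c ?z) ^ 4 \<le> (\<Sum>b\<in>?B. ?p (?z, b))"
    unfolding sum_char_dist_zero_row by (rule member_le_sum) auto
  then have "(cmod (c ?z) ^ 4) ^ 3 \<le> (\<Sum>b\<in>?B. ?p (?z, b)) ^ 3"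
    by (rule power_mono) simp
  also have "\<dots> \<le> 4 ^ n * (\<Sum>b\<in>?B. ?p (?z, b) ^ 3)"
    using power_sum_le_card_power_sum[of ?B "\<lambda>b. ?p (?z, b)" 3]
    by (simp add: card_bitstrings char_dist_nonneg power2_eq_square flip: power_mult_distrib)
  also have "(\<Sum>b\<in>?B. ?p (?z, b) ^ 3) = (\<Sum>x\<in>{?z} \<times> ?B. ?p x ^ 3)"
    by (simp add: sum.cartesian_product')
  also have "\<dots> \<le> (\<Sum>x\<in>?B \<times> ?B. ?p x ^ 3)"
    by (rule sum_mono2) (auto simp: char_dist_nonneg)
  also have "(\<Sum>x\<in>?B \<times> ?B. ?p x ^ 3) = 8 ^ n * (\<Sum>x\<in>?B \<times> ?B. fourier n ?p x ^ 3)"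
    by (simp add: sum_cube_fourier_char_dist)
  finally show ?thesis
    by (simp add: mult.assoc[symmetric] flip: power_mult power_mult_distrib)
qed

end
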